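(* Let $\lambda>0$, let $x^{(1)},\dots,x^{(N)}\in\mathbb{R}^d$ and $\hat\mu=\frac1N\sum_{i=1}^N\delta_{x^{(i)}}$. Define $D_{XX}\in\mathbb{R}^{(Nd)\times N}$ by $[D_{XX}]_{(i,l),j}=\partial_{1,l}k(x^{(i)},x^{(j)})$, $H_{XX}\in\mathbb{R}^{(Nd)\times(Nd)}$ by $[H_{XX}]_{(i,l),(j,m)}=\partial_{1,l}\partial_{2,m}k(x^{(i)},x^{(j)})$, and for $z\in\mathbb{R}^d$ the vectors $\mathbb K_X(z)=[k(x^{(1)},z),\dots,k(x^{(N)},z)]^\top\in\mathbb{R}^N$ and $\mathbb D_X(z)\in\mathbb{R}^{Nd}$ with entries $[\mathbb D_X(z)]_{(i,l)}=\partial_{1,l}k(x^{(i)},z)$. Let $\mathbf 1_N\in\mathbb{R}^N$ be the all-ones vector. Then for all $z\in\mathbb{R}^d$, $$f_{\hat\mu,\pi}(z)=\frac{\mathbf 1_N^\top\mathbb K_X(z)}{N\lambda}-\frac{\mathbb E_{Y\sim\pi}[k(Y,z)]}{\lambda}-\mathbb D_X(z)^\top(H_{XX}+N\lambda\mathrm{Id})^{-1}\Big(\frac{D_{XX}\mathbf 1_N}{N\lambda}-\frac{\mathbb E_{Y\sim\pi}[\mathbb D_X(Y)]}{\lambda}\Big).$$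
   Context: $k$ is a symmetric positive definite kernel on $\mathbb{R}^d$, sufficiently continuously differentiable, with RKHS $\mathcal H$; $\partial_{1,l},\partial_{2,m}$ are partial derivatives in the first/second argument. $\pi$ is a probability measure for which the mean embedding $m_\pi=\int k(y,\cdot)\mathrm{d}\pi(y)\in\mathcal H$ is well defined; $m_{\hat\mu}=\frac1N\sum_ik(x^{(i)},\cdot)$. $S_{\hat\mu}:\mathcal H\to\mathcal H$ is defined by $\langle f,S_{\hat\mu}g\rangle_{\mathcal H}=\frac1N\sum_{i=1}^N\nabla f(x^{(i)})^\top\nabla g(x^{(i)})$, and $f_{\hat\mu,\pi}:=(S_{\hat\mu}+\lambda\mathrm{Id})^{-1}(m_{\hat\mu}-m_\pi)$. Index pairs $(i,l)$, $i\le N$, $l\le d$, are identified with indices $1,\dots,Nd$ in a fixed order. *)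

theory Defs
  imports "HOL-Analysis.Analysis" "HOL-Probability.Probability"
begin

definition dir_deriv :: "('a::real_normed_vector \<Rightarrow> real) \<Rightarrow> 'a \<Rightarrow> 'a \<Rightarrow> real" where
  "dir_deriv g v x = deriv (\<lambda>t. g (x + t *\<^sub>R v)) 0"

definition C2_fun :: "('a::euclidean_space \<Rightarrow> real) \<Rightarrow> bool" where
  "C2_fun g \<longleftrightarrow>
     continuous_on UNIV g \<and>
     (\<forall>v\<in>Basis. \<forall>x. (\<lambda>t. g (x + t *\<^sub>R v)) field_differentiable (at 0)) \<and>
     (\<forall>v\<in>Basis. continuous_on UNIV (dir_deriv g v)) \<and>
     (\<forall>v\<in>Basis. \<forall>w\<in>Basis. \<forall>x.
        (\<lambda>t. dir_deriv g v (x + t *\<^sub>R w)) field_differentiable (at 0)) \<and>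
     (\<forall>v\<in>Basis. \<forall>w\<in>Basis. continuous_on UNIV (dir_deriv (dir_deriv g v) w))"

definition d1k :: "('d::finite) \<Rightarrow> (real^'d \<Rightarrow> real^'d \<Rightarrow> real) \<Rightarrow> real^'d \<Rightarrow> real^'d \<Rightarrow> real" where
  "d1k l k x y = dir_deriv (\<lambda>u. k u y) (axis l 1) x"

definition d12k :: "('d::finite) \<Rightarrow> 'd \<Rightarrow> (real^'d \<Rightarrow> real^'d \<Rightarrow> real) \<Rightarrow> real^'d \<Rightarrow> real^'d \<Rightarrow> real" where
  "d12k l m k x y = dir_deriv (\<lambda>u. dir_deriv (\<lambda>v. k u v) (axis m 1) y) (axis l 1) x"

text \<open>RKHS of k, represented through its canonical feature map \<phi> x = k(x,\<cdot>) in a Hilbert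
  space 'h: the element f of 'h is the function z \<mapsto> \<langle>f, \<phi> z\<rangle> (reproducing property),
  \<langle>\<phi> x, \<phi> y\<rangle> = k(x,y), and the span of the k(x,\<cdot>) is dense.\<close>
definition is_rkhs_feature ::
  "(real^'d::finite \<Rightarrow> real^'d \<Rightarrow> real) \<Rightarrow> (real^'d \<Rightarrow> 'h::{real_inner,complete_space}) \<Rightarrow> bool" where
  "is_rkhs_feature k \<phi> \<longleftrightarrow> (\<forall>x y. inner (\<phi> x) (\<phi> y) = k x y) \<and> closure (span (range \<phi>)) = UNIV"

definition rk_eval :: "(real^'d::finite \<Rightarrow> 'h::real_inner) \<Rightarrow> 'h \<Rightarrow> real^'d \<Rightarrow> real" where
  "rk_eval \<phi> f z = inner f (\<phi> z)"

definition rk_grad :: "(real^'d::finite \<Rightarrow> 'h::real_inner) \<Rightarrow> 'h \<Rightarrow> real^'d \<Rightarrow> 'd \<Rightarrow> real" where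
  "rk_grad \<phi> f x l = dir_deriv (rk_eval \<phi> f) (axis l 1) x"

text \<open>Mean embedding m_\<pi> = \<integral> k(y,\<cdot>) d\<pi>(y), characterised weakly by
  \<langle>f, m_\<pi>\<rangle> = \<integral> f(y) d\<pi>(y) for all f in H.\<close>
definition mean_emb_wd :: "(real^'d::finite \<Rightarrow> 'h::real_inner) \<Rightarrow> (real^'d) measure \<Rightarrow> 'h \<Rightarrow> bool" where
  "mean_emb_wd \<phi> \<pi> m \<longleftrightarrow>
     (\<forall>f. integrable \<pi> (\<lambda>y. inner f (\<phi> y)) \<and> inner f m = (\<integral>y. inner f (\<phi> y) \<partial>\<pi>))"

definition mean_emb :: "(real^'d::finite \<Rightarrow> 'h::real_inner) \<Rightarrow> (real^'d) measure \<Rightarrow> 'h" where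
  "mean_emb \<phi> \<pi> = (THE m. mean_emb_wd \<phi> \<pi> m)"

definition emp_mean_emb :: "(real^'d::finite \<Rightarrow> 'h::real_inner) \<Rightarrow> ('n::finite \<Rightarrow> real^'d) \<Rightarrow> 'h" where
  "emp_mean_emb \<phi> X = (1 / real CARD('n)) *\<^sub>R (\<Sum>i\<in>UNIV. \<phi> (X i))"

definition S_op :: "(real^'d::finite \<Rightarrow> 'h::real_inner) \<Rightarrow> ('n::finite \<Rightarrow> real^'d) \<Rightarrow> 'h \<Rightarrow> 'h" where
  "S_op \<phi> X g = (THE h. \<forall>f. inner f h =
      (1 / real CARD('n)) * (\<Sum>i\<in>UNIV. \<Sum>l\<in>UNIV. rk_grad \<phi> f (X i) l * rk_grad \<phi> g (X i) l))"

definition f_muhat_pi :: "(real^'d::finite \<Rightarrow> 'h::real_inner) \<Rightarrow> ('n::finite \<Rightarrow> real^'d) \<Rightarrow> (real^'d) measure \<Rightarrow> real \<Rightarrow> 'h" where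
  "f_muhat_pi \<phi> X \<pi> lam = (THE f. S_op \<phi> X f + lam *\<^sub>R f = emp_mean_emb \<phi> X - mean_emb \<phi> \<pi>)"

end

theory Submission
  imports Defs
begin

(* Since k is C^2, the feature map is differentiable in each coordinate direction: inner products
   of its difference quotients are mixed second differences of k divided by s t, which by the mean
   value theorem converge to the mixed partial derivative, so the quotients form a Cauchy net.
   With psi_(i,l) the derivative of the feature map at x_i in direction e_l, RKHS gradients at the
   data points become inner products with the psi's; hence S is the finite-rank operator
   (1/N) sum_p <., psi_p> psi_p, H_XX is the Gram matrix of the psi's and [D_X(z)]_p = <psi_p, k(z,.)>.
   The ansatz f = (b - sum_p v_p psi_p) / lam with b = m_muhat - m_pi reduces (S + lam) f = b to
   the linear system (H_XX + N lam Id) v = (<b, psi_p>)_p. *)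

lemma MVT_from_0:
  fixes f :: "real \<Rightarrow> real"
  assumes "\<And>y. (f has_real_derivative f' y) (at y)"
  obtains c where "\<bar>c\<bar> \<le> \<bar>t\<bar>" "f t - f 0 = t * f' c"
proof (cases t "0::real" rule: linorder_cases)
  case less
  with MVT2[OF less, of f f'] assms obtain c where "t < c" "c < 0" "f 0 - f t = (0 - t) * f' c"
    by auto
  then show ?thesis by (intro that[of c]) (auto simp: algebra_simps)
next
  case greater
  with MVT2[OF greater, of f f'] assms obtain c where "0 < c" "c < t" "f t - f 0 = (t - 0) * f' c"
    by auto
  then show ?thesis by (intro that[of c]) auto
qed (intro that[of 0], auto)

lemma DERIV_dir_deriv_line:
  fixes g :: "'a::real_normed_vector \<Rightarrow> real"
  assumes "\<forall>p. (\<lambda>t. g (p + t *\<^sub>R v)) field_differentiable (at 0)"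
  shows "((\<lambda>t. g (q + t *\<^sub>R v)) has_real_derivative dir_deriv g v (q + a *\<^sub>R v)) (at a)"
proof -
  let ?p = "q + a *\<^sub>R v"
  have "((\<lambda>t. g (?p + t *\<^sub>R v)) has_real_derivative dir_deriv g v ?p) (at (a + - a))"
    using assms unfolding dir_deriv_def by (simp add: DERIV_deriv_iff_field_differentiable)
  then have "((\<lambda>t. g (?p + (t + - a) *\<^sub>R v)) has_real_derivative dir_deriv g v ?p) (at a)"
    by (subst (asm) DERIV_shift) simp
  then show ?thesis by (simp add: algebra_simps)
qed

lemma mixed_difference_mean_value:
  fixes G :: "'a::real_normed_vector \<Rightarrow> real"
  assumes dv: "\<forall>p. (\<lambda>t. G (p + t *\<^sub>R v)) field_differentiable (at 0)"
    and dw: "\<forall>p. (\<lambda>t. dir_deriv G v (p + t *\<^sub>R w)) field_differentiable (at 0)"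
  obtains a b where "\<bar>a\<bar> \<le> \<bar>s\<bar>" "\<bar>b\<bar> \<le> \<bar>t\<bar>"
    "G (p + s *\<^sub>R v + t *\<^sub>R w) - G (p + s *\<^sub>R v) - G (p + t *\<^sub>R w) + G p
       = s * t * dir_deriv (dir_deriv G v) w (p + a *\<^sub>R v + b *\<^sub>R w)"
proof -
  define h where "h a = G (p + t *\<^sub>R w + a *\<^sub>R v) - G (p + a *\<^sub>R v)" for a
  have "(h has_real_derivative
      dir_deriv G v (p + t *\<^sub>R w + a *\<^sub>R v) - dir_deriv G v (p + a *\<^sub>R v)) (at a)" for a
    unfolding h_def by (intro derivative_intros DERIV_dir_deriv_line dv)
  then obtain a where a: "\<bar>a\<bar> \<le> \<bar>s\<bar>"
    "h s - h 0 = s * (dir_deriv G v (p + t *\<^sub>R w + a *\<^sub>R v) - dir_deriv G v (p + a *\<^sub>R v))"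
    by (rule MVT_from_0)
  define j where "j b = dir_deriv G v (p + a *\<^sub>R v + b *\<^sub>R w)" for b
  have "(j has_real_derivative dir_deriv (dir_deriv G v) w (p + a *\<^sub>R v + b *\<^sub>R w)) (at b)" for b
    unfolding j_def by (rule DERIV_dir_deriv_line[OF dw])
  then obtain b where b: "\<bar>b\<bar> \<le> \<bar>t\<bar>"
    "j t - j 0 = t * dir_deriv (dir_deriv G v) w (p + a *\<^sub>R v + b *\<^sub>R w)"
    by (rule MVT_from_0)
  have "G (p + s *\<^sub>R v + t *\<^sub>R w) - G (p + s *\<^sub>R v) - G (p + t *\<^sub>R w) + G p = h s - h 0"
    by (simp add: h_def algebra_simps)
  also have "\<dots> = s * (j t - j 0)"
    using a(2) by (simp add: j_def algebra_simps)
  finally show ?thesis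
    using that a(1) b by simp
qed

lemma inner_tendsto_imp_convergent:
  fixes \<Delta> :: "'a \<Rightarrow> 'h::{real_inner,complete_space}"
  assumes lim: "((\<lambda>(s, t). inner (\<Delta> s) (\<Delta> t)) \<longlongrightarrow> L) (F \<times>\<^sub>F F)"
  obtains \<psi> where "(\<Delta> \<longlongrightarrow> \<psi>) F"
proof -
  have "cauchy_filter (filtermap \<Delta> F)"
    unfolding cauchy_filter_metric_filtermap
  proof (intro allI impI)
    fix r :: real assume "r > 0"
    then have "\<forall>\<^sub>F (s, t) in F \<times>\<^sub>F F. \<bar>inner (\<Delta> s) (\<Delta> t) - L\<bar> < r\<^sup>2 / 4"
      using lim[unfolded tendsto_iff dist_real_def, rule_format, of "r\<^sup>2 / 4"]
      by (simp add: case_prod_beta')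
    then obtain Q where Q: "eventually Q F"
      and close: "\<And>s t. Q s \<Longrightarrow> Q t \<Longrightarrow> \<bar>inner (\<Delta> s) (\<Delta> t) - L\<bar> < r\<^sup>2 / 4"
      unfolding eventually_prod_same by auto
    have "dist (\<Delta> s) (\<Delta> t) < r" if "Q s" "Q t" for s t
    proof -
      have "(dist (\<Delta> s) (\<Delta> t))\<^sup>2 = (inner (\<Delta> s) (\<Delta> s) - L)
          - 2 * (inner (\<Delta> s) (\<Delta> t) - L) + (inner (\<Delta> t) (\<Delta> t) - L)"
        by (simp add: dist_norm power2_norm_eq_inner inner_diff_left inner_diff_right inner_commute)
      also have "\<dots> < r\<^sup>2"
        using close[OF that(1,1)] close[OF that] close[OF that(2,2)] by argo
      finally show ?thesis
        using \<open>r > 0\<close> by (simp add: power2_less_imp_less)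
    qed
    with Q show "\<exists>P. eventually P F \<and> (\<forall>s t. P s \<and> P t \<longrightarrow> dist (\<Delta> s) (\<Delta> t) < r)"
      by blast
  qed
  then obtain \<psi> where "filtermap \<Delta> F \<le> nhds \<psi>"
    using cauchy_filter_convergent convergent_filter_iff by blast
  then show ?thesis
    using that by (simp add: filterlim_def)
qed

lemma feature_diff_quotient_inner_mean_value:
  fixes \<phi> :: "'a::euclidean_space \<Rightarrow> 'h::real_inner"
  assumes feature: "\<And>x y. inner (\<phi> x) (\<phi> y) = k x y"
    and C2: "C2_fun (\<lambda>p. k (fst p) (snd p))" and e: "e \<in> Basis"
    and "s \<noteq> 0" "t \<noteq> 0"
  obtains a b where "\<bar>a\<bar> \<le> \<bar>s\<bar>" "\<bar>b\<bar> \<le> \<bar>t\<bar>"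
    "inner ((\<phi> (x + s *\<^sub>R e) - \<phi> x) /\<^sub>R s) ((\<phi> (x + t *\<^sub>R e) - \<phi> x) /\<^sub>R t)
       = dir_deriv (dir_deriv (\<lambda>p. k (fst p) (snd p)) (e, 0)) (0, e) (x + a *\<^sub>R e, x + b *\<^sub>R e)"
proof -
  define G where "G = (\<lambda>p. k (fst p) (snd p))"
  have basis: "(e, 0) \<in> Basis" "(0, e) \<in> Basis"
    using e by (auto simp: Basis_prod_def)
  have dv: "\<forall>p. (\<lambda>t. G (p + t *\<^sub>R (e, 0))) field_differentiable (at 0)"
    and dw: "\<forall>p. (\<lambda>t. dir_deriv G (e, 0) (p + t *\<^sub>R (0, e))) field_differentiable (at 0)"
    using C2 basis unfolding C2_fun_def G_def by blast+
  obtain a b where "\<bar>a\<bar> \<le> \<bar>s\<bar>" "\<bar>b\<bar> \<le> \<bar>t\<bar>"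
    "G ((x, x) + s *\<^sub>R (e, 0) + t *\<^sub>R (0, e)) - G ((x, x) + s *\<^sub>R (e, 0))
       - G ((x, x) + t *\<^sub>R (0, e)) + G (x, x)
     = s * t * dir_deriv (dir_deriv G (e, 0)) (0, e) ((x, x) + a *\<^sub>R (e, 0) + b *\<^sub>R (0, e))"
    by (rule mixed_difference_mean_value[OF dv dw])
  moreover have "inner ((\<phi> (x + s *\<^sub>R e) - \<phi> x) /\<^sub>R s) ((\<phi> (x + t *\<^sub>R e) - \<phi> x) /\<^sub>R t)
      = (G (x + s *\<^sub>R e, x + t *\<^sub>R e) - G (x + s *\<^sub>R e, x) - G (x, x + t *\<^sub>R e) + G (x, x)) / (s * t)"
    using assms(4,5) by (simp add: G_def feature inner_diff_left inner_diff_right field_simps)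
  ultimately show ?thesis
    using that assms(4,5) by (simp add: G_def)
qed

lemma feature_diff_quotient_inner_tendsto:
  fixes \<phi> :: "'a::euclidean_space \<Rightarrow> 'h::real_inner"
  assumes feature: "\<And>x y. inner (\<phi> x) (\<phi> y) = k x y"
    and C2: "C2_fun (\<lambda>p. k (fst p) (snd p))" and e: "e \<in> Basis"
  shows "((\<lambda>(s, t). inner ((\<phi> (x + s *\<^sub>R e) - \<phi> x) /\<^sub>R s) ((\<phi> (x + t *\<^sub>R e) - \<phi> x) /\<^sub>R t))
      \<longlongrightarrow> dir_deriv (dir_deriv (\<lambda>p. k (fst p) (snd p)) (e, 0)) (0, e) (x, x)) (at 0 \<times>\<^sub>F at 0)"
    (is "((\<lambda>(s, t). ?Q s t) \<longlongrightarrow> ?D2 (x, x)) _")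
  unfolding tendsto_iff
proof (intro allI impI)
  fix \<epsilon> :: real assume "\<epsilon> > 0"
  have "continuous_on UNIV ?D2"
    using C2 e unfolding C2_fun_def by (auto simp: Basis_prod_def)
  then obtain \<delta> where "\<delta> > 0" and \<delta>: "\<And>q. dist q (x, x) < \<delta> \<Longrightarrow> dist (?D2 q) (?D2 (x, x)) < \<epsilon>"
    using \<open>\<epsilon> > 0\<close> unfolding continuous_on_iff by blast
  have near: "\<forall>\<^sub>F s in at 0. s \<noteq> 0 \<and> \<bar>s\<bar> < \<delta> / 2"
    unfolding eventually_at using \<open>\<delta> > 0\<close> by (auto intro!: exI[of _ "\<delta> / 2"])
  have "dist (?Q s t) (?D2 (x, x)) < \<epsilon>"
    if small: "s \<noteq> 0 \<and> \<bar>s\<bar> < \<delta> / 2" "t \<noteq> 0 \<and> \<bar>t\<bar> < \<delta> / 2" for s t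
  proof -
    obtain a b where ab: "\<bar>a\<bar> \<le> \<bar>s\<bar>" "\<bar>b\<bar> \<le> \<bar>t\<bar>" "?Q s t = ?D2 (x + a *\<^sub>R e, x + b *\<^sub>R e)"
      using feature_diff_quotient_inner_mean_value[OF feature C2 e] small by blast
    have "dist (x + a *\<^sub>R e, x + b *\<^sub>R e) (x, x) \<le> norm (a *\<^sub>R e) + norm (b *\<^sub>R e)"
      using norm_Pair_le[of "a *\<^sub>R e" "b *\<^sub>R e"] by (simp add: dist_norm)
    also have "\<dots> < \<delta>"
      using ab(1,2) small e by simp
    finally show ?thesis
      using \<delta> ab(3) by simp
  qed
  then show "\<forall>\<^sub>F p in at 0 \<times>\<^sub>F at 0. dist ((\<lambda>(s, t). ?Q s t) p) (?D2 (x, x)) < \<epsilon>"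
    unfolding eventually_prod_same using near by auto
qed

definition vector_dir_deriv :: "('a::real_normed_vector \<Rightarrow> 'b::real_normed_vector) \<Rightarrow> 'a \<Rightarrow> 'a \<Rightarrow> 'b" where
  "vector_dir_deriv \<phi> e x = Lim (at 0) (\<lambda>t. (\<phi> (x + t *\<^sub>R e) - \<phi> x) /\<^sub>R t)"

lemma feature_diff_quotient_tendsto:
  fixes \<phi> :: "'a::euclidean_space \<Rightarrow> 'h::{real_inner,complete_space}"
  assumes "\<And>x y. inner (\<phi> x) (\<phi> y) = k x y"
    and "C2_fun (\<lambda>p. k (fst p) (snd p))" and "e \<in> Basis"
  shows "((\<lambda>t. (\<phi> (x + t *\<^sub>R e) - \<phi> x) /\<^sub>R t) \<longlongrightarrow> vector_dir_deriv \<phi> e x) (at 0)"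
proof -
  obtain \<psi> where "((\<lambda>t. (\<phi> (x + t *\<^sub>R e) - \<phi> x) /\<^sub>R t) \<longlongrightarrow> \<psi>) (at 0)"
    using inner_tendsto_imp_convergent feature_diff_quotient_inner_tendsto[OF assms] .
  then show ?thesis
    unfolding vector_dir_deriv_def by (simp add: tendsto_Lim)
qed

lemma dir_deriv_inner_feature:
  fixes \<phi> :: "'a::euclidean_space \<Rightarrow> 'h::{real_inner,complete_space}"
  assumes "\<And>x y. inner (\<phi> x) (\<phi> y) = k x y"
    and "C2_fun (\<lambda>p. k (fst p) (snd p))" and "e \<in> Basis"
  shows "dir_deriv (\<lambda>u. inner f (\<phi> u)) e x = inner f (vector_dir_deriv \<phi> e x)"
proof -
  have "((\<lambda>t. inner f ((\<phi> (x + t *\<^sub>R e) - \<phi> x) /\<^sub>R t)) \<longlongrightarrow> inner f (vector_dir_deriv \<phi> e x)) (at 0)"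
    by (intro tendsto_intros feature_diff_quotient_tendsto[OF assms])
  then have "((\<lambda>t. inner f (\<phi> (x + t *\<^sub>R e))) has_real_derivative inner f (vector_dir_deriv \<phi> e x)) (at 0)"
    unfolding DERIV_def by (simp add: inner_diff_right divide_inverse mult.commute)
  then show ?thesis
    unfolding dir_deriv_def by (rule DERIV_imp_deriv)
qed

definition frame_operator :: "('p::finite \<Rightarrow> 'h::real_inner) \<Rightarrow> 'h \<Rightarrow> 'h" where
  "frame_operator \<psi> g = (\<Sum>p\<in>UNIV. inner g (\<psi> p) *\<^sub>R \<psi> p)"

definition gram_matrix :: "('p::finite \<Rightarrow> 'h::real_inner) \<Rightarrow> real^'p^'p" where
  "gram_matrix \<psi> = (\<chi> p q. inner (\<psi> p) (\<psi> q))"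

lemma frame_operator_diff: "frame_operator \<psi> (f - g) = frame_operator \<psi> f - frame_operator \<psi> g"
  by (simp add: frame_operator_def inner_diff_left scaleR_left_diff_distrib sum_subtractf)

lemma inner_frame_operator_nonneg: "inner g (frame_operator \<psi> g) \<ge> 0"
  by (simp add: frame_operator_def inner_sum_right sum_nonneg)

lemma gram_matrix_mult_vector: "(gram_matrix \<psi> *v v) $ p = inner (\<psi> p) (\<Sum>q\<in>UNIV. v $ q *\<^sub>R \<psi> q)"
  by (simp add: gram_matrix_def matrix_vector_mult_def inner_sum_right mult.commute)

lemma gram_matrix_quadratic_form:
  "v \<bullet> (gram_matrix \<psi> *v v) = inner (\<Sum>p\<in>UNIV. v $ p *\<^sub>R \<psi> p) (\<Sum>p\<in>UNIV. v $ p *\<^sub>R \<psi> p)"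
  by (simp add: inner_vec_def gram_matrix_mult_vector inner_sum_left sum_distrib_left)

lemma invertible_gram_matrix_add:
  fixes \<psi> :: "'p::finite \<Rightarrow> 'h::real_inner"
  assumes "\<mu> > 0"
  shows "invertible (gram_matrix \<psi> + \<mu> *\<^sub>R mat 1)"
  unfolding invertible_left_inverse matrix_left_invertible_ker
proof (intro allI impI)
  fix v :: "real^'p"
  assume "(gram_matrix \<psi> + \<mu> *\<^sub>R mat 1) *v v = 0"
  then have "v \<bullet> (gram_matrix \<psi> *v v + \<mu> *\<^sub>R v) = 0"
    by (simp add: matrix_vector_mult_add_rdistrib flip: scaleR_matrix_vector_assoc)
  then have "v \<bullet> (gram_matrix \<psi> *v v) + \<mu> * (v \<bullet> v) = 0"
    by (simp add: inner_add_right)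
  moreover have "v \<bullet> (gram_matrix \<psi> *v v) \<ge> 0"
    by (simp add: gram_matrix_quadratic_form)
  ultimately have "\<mu> * (v \<bullet> v) = 0"
    using \<open>\<mu> > 0\<close> by (smt (verit) inner_ge_zero mult_nonneg_nonneg)
  then show "v = 0"
    using \<open>\<mu> > 0\<close> by simp
qed

lemma matrix_inv_right:
  fixes A :: "'a::field^'n^'n"
  assumes "invertible A"
  shows "A ** matrix_inv A = mat 1"
  using assms unfolding invertible_def matrix_inv_def by (rule someI_ex[THEN conjunct1])

lemma regularized_frame_operator_inj:
  assumes "c \<ge> 0" "lam > 0"
    and eq: "c *\<^sub>R frame_operator \<psi> f + lam *\<^sub>R f = c *\<^sub>R frame_operator \<psi> g + lam *\<^sub>R g"
  shows "f = g"
proof -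
  define d where "d = f - g"
  have "c *\<^sub>R frame_operator \<psi> d + lam *\<^sub>R d = 0"
    using eq by (simp add: d_def frame_operator_diff algebra_simps)
  then have "c * inner d (frame_operator \<psi> d) + lam * inner d d = 0"
    by (metis inner_add_right inner_scaleR_right inner_zero_right)
  then have "lam * inner d d = 0"
    using \<open>c \<ge> 0\<close> \<open>lam > 0\<close> inner_frame_operator_nonneg[of d \<psi>]
    by (smt (verit) inner_ge_zero mult_nonneg_nonneg)
  then show ?thesis
    using \<open>lam > 0\<close> by (simp add: d_def)
qed

lemma regularized_frame_operator_solution:
  fixes \<psi> :: "'p::finite \<Rightarrow> 'h::real_inner" and b :: 'h
  assumes "c > 0" "lam > 0"
  defines "v \<equiv> matrix_inv (gram_matrix \<psi> + (lam / c) *\<^sub>R mat 1) *v (\<chi> p. inner b (\<psi> p))"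
  defines "f \<equiv> (1 / lam) *\<^sub>R (b - (\<Sum>p\<in>UNIV. v $ p *\<^sub>R \<psi> p))"
  shows "c *\<^sub>R frame_operator \<psi> f + lam *\<^sub>R f = b"
proof -
  have "(gram_matrix \<psi> + (lam / c) *\<^sub>R mat 1) *v v = (\<chi> p. inner b (\<psi> p))"
    using invertible_gram_matrix_add[of "lam / c" \<psi>] assms(1,2)
    by (simp add: v_def matrix_vector_mul_assoc matrix_inv_right)
  then have "(gram_matrix \<psi> *v v) $ p + (lam / c) * v $ p = inner b (\<psi> p)" for p
    by (simp add: matrix_vector_mult_add_rdistrib vec_eq_iff flip: scaleR_matrix_vector_assoc)
  then have coeff: "inner f (\<psi> p) = v $ p / c" for p
    using assms(1,2)
    by (simp add: f_def inner_diff_left inner_diff_right gram_matrix_mult_vector inner_commute field_simps)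
  have "c *\<^sub>R frame_operator \<psi> f = (\<Sum>p\<in>UNIV. v $ p *\<^sub>R \<psi> p)"
    using assms(1) by (simp add: frame_operator_def coeff scaleR_sum_right)
  then show ?thesis
    using assms(2) by (simp add: f_def)
qed

lemma the_regularized_frame_operator_solution:
  fixes \<psi> :: "'p::finite \<Rightarrow> 'h::real_inner" and b :: 'h
  assumes "c > 0" "lam > 0"
  shows "(THE f. c *\<^sub>R frame_operator \<psi> f + lam *\<^sub>R f = b)
    = (1 / lam) *\<^sub>R (b - (\<Sum>p\<in>UNIV.
        (matrix_inv (gram_matrix \<psi> + (lam / c) *\<^sub>R mat 1) *v (\<chi> p. inner b (\<psi> p))) $ p *\<^sub>R \<psi> p))"
    (is "_ = ?sol")
proof (rule the_equality)
  show sol: "c *\<^sub>R frame_operator \<psi> ?sol + lam *\<^sub>R ?sol = b"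
    by (rule regularized_frame_operator_solution[OF assms])
  fix f
  assume "c *\<^sub>R frame_operator \<psi> f + lam *\<^sub>R f = b"
  with sol have "c *\<^sub>R frame_operator \<psi> f + lam *\<^sub>R f = c *\<^sub>R frame_operator \<psi> ?sol + lam *\<^sub>R ?sol"
    by (simp only:)
  then show "f = ?sol"
    by (rule regularized_frame_operator_inj[OF less_imp_le[OF \<open>c > 0\<close>] \<open>lam > 0\<close>])
qed

lemma mean_emb_eqI: "mean_emb_wd \<phi> \<pi> m \<Longrightarrow> mean_emb \<phi> \<pi> = m"
  unfolding mean_emb_def
  by (rule the_equality) (auto simp: mean_emb_wd_def intro: vector_eq_ldot[THEN iffD1])

lemma inner_emp_mean_emb:
  "inner (emp_mean_emb \<phi> X) g = (\<Sum>i\<in>UNIV. inner (\<phi> (X i)) g) / real CARD('n)"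
  for X :: "'n::finite \<Rightarrow> real^'d::finite"
  by (simp add: emp_mean_emb_def inner_sum_left)

context
  fixes k :: "real^'d::finite \<Rightarrow> real^'d \<Rightarrow> real"
    and \<phi> :: "real^'d \<Rightarrow> 'h::{real_inner,complete_space}"
  assumes feature: "\<And>x y. inner (\<phi> x) (\<phi> y) = k x y"
    and C2: "C2_fun (\<lambda>p. k (fst p) (snd p))"
begin

lemma rk_grad_eq_inner: "rk_grad \<phi> f x l = inner f (vector_dir_deriv \<phi> (axis l 1) x)"
  unfolding rk_grad_def rk_eval_def by (rule dir_deriv_inner_feature[OF feature C2]) simp

lemma d1k_eq_inner: "d1k l k x z = inner (vector_dir_deriv \<phi> (axis l 1) x) (\<phi> z)"
  using dir_deriv_inner_feature[OF feature C2, of "axis l 1" "\<phi> z" x]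
  by (simp add: d1k_def inner_commute flip: feature)

lemma d12k_eq_inner:
  "d12k l m k x y = inner (vector_dir_deriv \<phi> (axis l 1) x) (vector_dir_deriv \<phi> (axis m 1) y)"
  using dir_deriv_inner_feature[OF feature C2, of "axis l 1" "vector_dir_deriv \<phi> (axis m 1) y" x]
    dir_deriv_inner_feature[OF feature C2, of "axis m 1" "\<phi> _" y]
  by (simp add: d12k_def inner_commute flip: feature)

lemma S_op_eq_frame_operator:
  fixes X :: "'n::finite \<Rightarrow> real^'d"
  shows "S_op \<phi> X g
    = (1 / real CARD('n)) *\<^sub>R frame_operator (\<lambda>(i, l). vector_dir_deriv \<phi> (axis l 1) (X i)) g"
  unfolding S_op_def
  by (rule the_equality)
    (auto simp: rk_grad_eq_inner frame_operator_def inner_sum_right sum.cartesian_product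
      case_prod_beta mult.commute intro: vector_eq_ldot[THEN iffD1])

lemma f_muhat_pi_eq:
  fixes X :: "'n::finite \<Rightarrow> real^'d"
  assumes m: "mean_emb_wd \<phi> \<pi> m" and "lam > 0"
  defines "\<psi> \<equiv> \<lambda>(i, l). vector_dir_deriv \<phi> (axis l 1) (X i)"
    and "b \<equiv> emp_mean_emb \<phi> X - m"
  shows "f_muhat_pi \<phi> X \<pi> lam = (1 / lam) *\<^sub>R (b - (\<Sum>p\<in>UNIV.
      (matrix_inv (gram_matrix \<psi> + (real CARD('n) * lam) *\<^sub>R mat 1) *v (\<chi> p. inner b (\<psi> p))) $ p *\<^sub>R \<psi> p))"
proof -
  have "f_muhat_pi \<phi> X \<pi> lam = (THE f. (1 / real CARD('n)) *\<^sub>R frame_operator \<psi> f + lam *\<^sub>R f = b)"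
    by (simp add: f_muhat_pi_def S_op_eq_frame_operator mean_emb_eqI[OF m] b_def \<psi>_def)
  also have "\<dots> = (1 / lam) *\<^sub>R (b - (\<Sum>p\<in>UNIV.
      (matrix_inv (gram_matrix \<psi> + (real CARD('n) * lam) *\<^sub>R mat 1) *v (\<chi> p. inner b (\<psi> p))) $ p *\<^sub>R \<psi> p))"
    using the_regularized_frame_operator_solution[of "1 / real CARD('n)" lam \<psi> b] \<open>lam > 0\<close>
    by (simp add: mult.commute)
  finally show ?thesis .
qed

end

theorem proposition2:
  fixes k :: "real^'d::finite \<Rightarrow> real^'d \<Rightarrow> real"
    and \<phi> :: "real^'d \<Rightarrow> 'h::{real_inner,complete_space}"
    and X :: "'n::finite \<Rightarrow> real^'d"
    and \<pi> :: "(real^'d) measure"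
    and lam :: real
  assumes sym: "\<And>x y. k x y = k y x"
    and C2: "C2_fun (\<lambda>p. k (fst p) (snd p))"
    and rkhs: "is_rkhs_feature k \<phi>"
    and prob: "prob_space \<pi>" and sets_pi: "sets \<pi> = sets borel"
    and mean_wd: "\<exists>m. mean_emb_wd \<phi> \<pi> m"
    and lam_pos: "lam > 0"
  shows "\<forall>z. rk_eval \<phi> (f_muhat_pi \<phi> X \<pi> lam) z =
      (\<Sum>i\<in>UNIV. k (X i) z) / (real CARD('n) * lam)
      - (\<integral>y. k y z \<partial>\<pi>) / lam
      - (\<chi> p. d1k (snd p) k (X (fst p)) z) \<bullet>
          (matrix_inv ((\<chi> p q. d12k (snd p) (snd q) k (X (fst p)) (X (fst q))) + (real CARD('n) * lam) *\<^sub>R mat 1)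
           *v ((1 / (real CARD('n) * lam)) *\<^sub>R ((\<chi> p j. d1k (snd p) k (X (fst p)) (X j)) *v (\<chi> j. 1))
               - (1 / lam) *\<^sub>R (\<chi> p. \<integral>y. d1k (snd p) k (X (fst p)) y \<partial>\<pi>)))"
proof -
  have feature: "\<And>x y. inner (\<phi> x) (\<phi> y) = k x y"
    using rkhs unfolding is_rkhs_feature_def by blast
  obtain m where m: "mean_emb_wd \<phi> \<pi> m"
    using mean_wd ..
  then have inner_m: "inner g m = (\<integral>y. inner g (\<phi> y) \<partial>\<pi>)" for g
    unfolding mean_emb_wd_def by blast
  define N where "N = real CARD('n)"
  define \<psi> :: "'n \<times> 'd \<Rightarrow> 'h" where "\<psi> = (\<lambda>(i, l). vector_dir_deriv \<phi> (axis l 1) (X i))"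
  define b where "b = emp_mean_emb \<phi> X - m"
  define v where "v = matrix_inv (gram_matrix \<psi> + (N * lam) *\<^sub>R mat 1) *v (\<chi> p. inner b (\<psi> p))"
  have d1k: "d1k (snd p) k (X (fst p)) y = inner (\<psi> p) (\<phi> y)" for p y
    by (simp add: \<psi>_def d1k_eq_inner[OF feature C2] case_prod_beta)
  have gram: "(\<chi> p q. d12k (snd p) (snd q) k (X (fst p)) (X (fst q))) = gram_matrix \<psi>"
    by (simp add: gram_matrix_def d12k_eq_inner[OF feature C2] \<psi>_def case_prod_beta)
  have rhs: "(1 / (N * lam)) *\<^sub>R ((\<chi> p j. d1k (snd p) k (X (fst p)) (X j)) *v (\<chi> j. 1))
      - (1 / lam) *\<^sub>R (\<chi> p. \<integral>y. d1k (snd p) k (X (fst p)) y \<partial>\<pi>) = (1 / lam) *\<^sub>R (\<chi> p. inner b (\<psi> p))"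
    using lam_pos
    by (simp add: vec_eq_iff matrix_vector_mult_def d1k b_def inner_diff_left inner_emp_mean_emb
        inner_commute[of m] inner_m inner_commute[of "\<phi> _"] N_def field_simps)
  have bz: "inner b (\<phi> z) = (\<Sum>i\<in>UNIV. k (X i) z) / N - (\<integral>y. k y z \<partial>\<pi>)" for z
    by (simp add: b_def inner_diff_left inner_emp_mean_emb feature inner_commute[of m] inner_m N_def
        sym[of z])
  have "f_muhat_pi \<phi> X \<pi> lam = (1 / lam) *\<^sub>R (b - (\<Sum>p\<in>UNIV. v $ p *\<^sub>R \<psi> p))"
    unfolding \<psi>_def b_def v_def N_def by (rule f_muhat_pi_eq[OF feature C2 m lam_pos])
  then have eval: "rk_eval \<phi> (f_muhat_pi \<phi> X \<pi> lam) z
      = inner b (\<phi> z) / lam - (\<chi> p. inner (\<psi> p) (\<phi> z)) \<bullet> ((1 / lam) *\<^sub>R v)" for z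
    by (simp add: rk_eval_def inner_diff_left inner_sum_left inner_vec_def sum_divide_distrib
        diff_divide_distrib mult.commute)
  show ?thesis
    unfolding N_def[symmetric] gram rhs unfolding d1k
    by (simp add: eval bz v_def matrix_vector_mult_scaleR diff_divide_distrib)
qed

end
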